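(* For every $n\ge2$, $$\mathrm{Var}\big(U^{(n)}-\tau^{(n)}\big)=4(H_{n,2}-1)-\frac{2H_{n,1}^2}{n-1}+\frac{4H_{n,1}}{n-1}+\frac{6H_{n,2}}{n-1}-\frac{8}{n-1}-\frac{4(H_{n,1}-1)^2}{(n-1)^2},$$ which tends to $\frac{2\pi^2}{3}-4$ as $n\to\infty$.
   Context: Fix $n\ge 2$. A Yule tree with speciation rate 1 on $n$ tips: start with a single lineage; each lineage independently splits into two at rate 1; the process is stopped just before the $n$-th speciation event, so the tree has $n$ tips and $n-1$ speciation (internal) nodes, numbered $1,\dots,n-1$ chronologically from the root. For $i=1,\dots,n$ let $T_i$ be the length of the time interval during which there are exactly $i$ lineages; the $T_i$ are independent, $T_i\sim\mathrm{Exp}(i)$ (rate $i$), the $k$-th speciation occurs at time $T_1+\dots+T_k$, and at each speciation the splitting lineage is uniformly chosen among current lineages, independently of the $T_i$. The tree height is $U^{(n)}=T_1+\dots+T_n$. Choose an unordered pair of distinct tips uniformly at random and let $\kappa_n\in\{1,\dots,n-1\}$ be the index of the speciation event at which their lineages split; the coalescent time of the pair is $\tau^{(n)}=T_{\kappa_n+1}+\dots+T_n$. $H_{n,r}=\sum_{i=1}^n i^{-r}$. *)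

theory Defs
  imports "HOL-Probability.Probability"
begin

definition Hn :: "nat \<Rightarrow> nat \<Rightarrow> real" where
  "Hn n r = (\<Sum>i=1..n. 1 / real i ^ r)"

text \<open>When there are k lineages,
  labelled 0..k-1, the k-th speciation event splits lineage s k (uniform in 0..k-1);
  afterwards the two daughters are labelled s k and k.  Thus the parent, at the time
  with k lineages, of a lineage x (label in 0..k) existing with k+1 lineages is
  yule_parent s k x.\<close>
definition yule_parent :: "(nat \<Rightarrow> nat) \<Rightarrow> nat \<Rightarrow> nat \<Rightarrow> nat" where
  "yule_parent s k x = (if x = k then s k else x)"

text \<open>yule_anc s m d x: ancestor, d events back, of lineage x living when there are m lineages.\<close>
fun yule_anc :: "(nat \<Rightarrow> nat) \<Rightarrow> nat \<Rightarrow> nat \<Rightarrow> nat \<Rightarrow> nat" where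
  "yule_anc s m 0 x = x"
| "yule_anc s m (Suc d) x = yule_anc s (m - 1) d (yule_parent s (m - 1) x)"

definition anc_at :: "nat \<Rightarrow> (nat \<Rightarrow> nat) \<Rightarrow> nat \<Rightarrow> nat \<Rightarrow> nat" where
  "anc_at n s k x = yule_anc s n (n - k) x"

definition split_index :: "nat \<Rightarrow> (nat \<Rightarrow> nat) \<Rightarrow> nat set \<Rightarrow> nat" where
  "split_index n s P = (THE k. 1 \<le> k \<and> k < n \<and>
      card (anc_at n s k ` P) = 1 \<and> card (anc_at n s (k + 1) ` P) = 2)"

definition yule_discrete :: "nat \<Rightarrow> ((nat \<Rightarrow> nat) \<times> nat set) pmf" where
  "yule_discrete n =
     pair_pmf (Pi_pmf {1..<n} 0 (\<lambda>k. pmf_of_set {0..<k}))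
              (pmf_of_set {P. \<exists>a b. P = {a, b} \<and> a < n \<and> b < n \<and> a \<noteq> b})"

definition yule_space :: "nat \<Rightarrow> (((nat \<Rightarrow> nat) \<times> nat set) \<times> (nat \<Rightarrow> real)) measure" where
  "yule_space n = measure_pmf (yule_discrete n) \<Otimes>\<^sub>M
      (\<Pi>\<^sub>M i\<in>{1..n}. density lborel (exponential_density (real i)))"

definition yule_height :: "nat \<Rightarrow> ((nat \<Rightarrow> nat) \<times> nat set) \<times> (nat \<Rightarrow> real) \<Rightarrow> real" where
  "yule_height n \<omega> = (\<Sum>i=1..n. snd \<omega> i)"

definition yule_coal :: "nat \<Rightarrow> ((nat \<Rightarrow> nat) \<times> nat set) \<times> (nat \<Rightarrow> real) \<Rightarrow> real" where
  "yule_coal n \<omega> = (\<Sum>i=split_index n (fst (fst \<omega>)) (snd (fst \<omega>)) + 1..n. snd \<omega> i)"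

end

theory Submission
  imports Defs "HOL-Real_Asymp.Real_Asymp"
begin

text \<open>Adding tip n as the sister of a uniformly chosen tip shows that the weighted counts
  C_n(h) = sum over topologies and tip pairs of h(kappa) satisfy
  C_{n+1}(h) = (n + 2) C_n(h) + n! h(n), so P(kappa_n = k) is proportional to 1/((k+1)(k+2))
  for 1 <= k < n.  Given kappa = k, U - tau = T_1 + ... + T_k has mean H_{k,1} and second
  moment H_{k,1}^2 + H_{k,2}, since the T_i are independent of the topology.  Averaging these
  against the law of kappa gives four telescoping sums with closed forms in H_{n,1} and
  H_{n,2}; the limit follows from H_{n,2} -> pi^2/6 and H_{n,1} <= 1 + ln n.\<close>

section \<open>Genealogy of a pair of tips\<close>

definition splits_at :: "nat \<Rightarrow> (nat \<Rightarrow> nat) \<Rightarrow> nat set \<Rightarrow> nat \<Rightarrow> bool" where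
  "splits_at n s P k \<longleftrightarrow> 1 \<le> k \<and> k < n \<and>
      card (anc_at n s k ` P) = 1 \<and> card (anc_at n s (k + 1) ` P) = 2"

definition valid_choices :: "nat \<Rightarrow> (nat \<Rightarrow> nat) \<Rightarrow> bool" where
  "valid_choices n s \<longleftrightarrow> (\<forall>k. 1 \<le> k \<and> k < n \<longrightarrow> s k < k)"

lemma split_index_eq_The: "split_index n s P = (THE k. splits_at n s P k)"
  unfolding split_index_def splits_at_def ..

lemma anc_at_Suc: "k \<le> n \<Longrightarrow> anc_at (Suc n) s k x = anc_at n s k (yule_parent s n x)"
  by (simp add: anc_at_def Suc_diff_le)

lemma anc_at_self: "anc_at n s n x = x"
  by (simp add: anc_at_def)

lemma yule_anc_cong: "d \<le> m \<Longrightarrow> (\<forall>j<m. s j = t j) \<Longrightarrow> yule_anc s m d x = yule_anc t m d x"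
proof (induction d arbitrary: m x)
  case (Suc d)
  then have "yule_parent s (m - 1) x = yule_parent t (m - 1) x"
    by (simp add: yule_parent_def)
  with Suc show ?case by simp
qed simp

lemma split_index_cong: "(\<forall>j<n. s j = t j) \<Longrightarrow> split_index n s P = split_index n t P"
proof -
  assume "\<forall>j<n. s j = t j"
  then have "anc_at n s k = anc_at n t k" for k
    unfolding anc_at_def by (intro ext yule_anc_cong) auto
  then show ?thesis by (simp add: split_index_def)
qed

lemma splits_at_Suc_iff:
  assumes "valid_choices (Suc n) s" "a < Suc n" "b < Suc n" "a \<noteq> b"
  defines "a' \<equiv> yule_parent s n a" and "b' \<equiv> yule_parent s n b"
  shows "a' < n" "b' < n"
    and "splits_at (Suc n) s {a, b} k \<longleftrightarrow> (if a' = b' then k = n else splits_at n s {a', b'} k)"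
proof -
  have n: "1 \<le> n" using assms by auto
  show "a' < n" "b' < n" using assms n by (auto simp: valid_choices_def yule_parent_def)
  have below: "anc_at (Suc n) s j ` {a, b} = anc_at n s j ` {a', b'}" if "j \<le> n" for j
    using that by (auto simp: anc_at_Suc a'_def b'_def)
  show "splits_at (Suc n) s {a, b} k \<longleftrightarrow> (if a' = b' then k = n else splits_at n s {a', b'} k)"
  proof (cases "k < n")
    case True
    then show ?thesis
      using below[of k] below[of "k + 1"] by (auto simp: splits_at_def card_insert_if)
  next
    case False
    then consider "k = n" | "k > n" by linarith
    then show ?thesis
      by cases (use below[of n] n assms(4) in \<open>auto simp: splits_at_def anc_at_self card_insert_if\<close>)
  qed
qed

lemma splits_at_unique:
  "valid_choices n s \<Longrightarrow> a < n \<Longrightarrow> b < n \<Longrightarrow> a \<noteq> b \<Longrightarrow> \<exists>!k. splits_at n s {a, b} k"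
proof (induction n arbitrary: a b)
  case (Suc n)
  note step = splits_at_Suc_iff[OF Suc.prems]
  have "valid_choices n s" using Suc.prems(1) by (simp add: valid_choices_def)
  with Suc.IH[OF this step(1,2)] show ?case
    unfolding step(3) by (cases "yule_parent s n a = yule_parent s n b") auto
qed simp

lemma split_index_splits_at:
  "valid_choices n s \<Longrightarrow> a < n \<Longrightarrow> b < n \<Longrightarrow> a \<noteq> b \<Longrightarrow> splits_at n s {a, b} (split_index n s {a, b})"
  unfolding split_index_eq_The by (rule theI', rule splits_at_unique)

lemma split_index_Suc:
  assumes "valid_choices (Suc n) s" "a < Suc n" "b < Suc n" "a \<noteq> b"
  shows "split_index (Suc n) s {a, b} =
     (if yule_parent s n a = yule_parent s n b then n
      else split_index n s {yule_parent s n a, yule_parent s n b})"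
proof -
  note step = splits_at_Suc_iff[OF assms]
  have valid: "valid_choices n s" using assms(1) by (simp add: valid_choices_def)
  have "splits_at (Suc n) s {a, b} (split_index (Suc n) s {a, b})"
    by (rule split_index_splits_at[OF assms])
  then show ?thesis
    unfolding step(3)
    using splits_at_unique[OF valid step(1,2)] split_index_splits_at[OF valid step(1,2)]
    by (auto split: if_splits)
qed

section \<open>Counting split indices\<close>

definition choice_functions :: "nat \<Rightarrow> (nat \<Rightarrow> nat) set" where
  "choice_functions n = PiE_dflt {1..<n} 0 (\<lambda>k. {0..<k})"

definition tip_pairs :: "nat \<Rightarrow> nat set set" where
  "tip_pairs n = {P. \<exists>a b. P = {a, b} \<and> a < n \<and> b < n \<and> a \<noteq> b}"

definition split_count :: "nat \<Rightarrow> (nat \<Rightarrow> real) \<Rightarrow> real" where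
  "split_count n h = (\<Sum>s\<in>choice_functions n. \<Sum>P\<in>tip_pairs n. h (split_index n s P))"

definition kappa_sum :: "nat \<Rightarrow> (nat \<Rightarrow> real) \<Rightarrow> real" where
  "kappa_sum n h = (\<Sum>k=1..<n. h k / ((real k + 1) * (real k + 2)))"

lemma choice_functions_valid: "s \<in> choice_functions n \<Longrightarrow> valid_choices n s"
  by (auto simp: choice_functions_def PiE_dflt_def valid_choices_def)

lemma finite_choice_functions: "finite (choice_functions n)"
  unfolding choice_functions_def by (rule finite_PiE_dflt) auto

lemma card_choice_functions: "card (choice_functions n) = fact (n - 1)"
proof -
  have "{1..<n} = {1..n - 1}" by auto
  then show ?thesis
    unfolding choice_functions_def by (simp add: card_PiE_dflt fact_prod)
qed

lemma finite_tip_pairs: "finite (tip_pairs n)"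
  by (rule finite_subset[of _ "Pow {..<n}"]) (auto simp: tip_pairs_def)

lemma split_index_range:
  "(s, P) \<in> choice_functions n \<times> tip_pairs n \<Longrightarrow> split_index n s P \<in> {1..<n}"
  using split_index_splits_at[OF choice_functions_valid]
  by (fastforce simp: tip_pairs_def splits_at_def)

lemma sum_tip_pairs_Suc:
  "(\<Sum>P\<in>tip_pairs (Suc n). F P) = (\<Sum>P\<in>tip_pairs n. F P) + (\<Sum>v<n. F {v, n})"
proof -
  have "tip_pairs (Suc n) = tip_pairs n \<union> (\<lambda>v. {v, n}) ` {..<n}"
    by (auto simp: tip_pairs_def less_Suc_eq)
  moreover have "tip_pairs n \<inter> (\<lambda>v. {v, n}) ` {..<n} = {}"
    by (auto simp: tip_pairs_def doubleton_eq_iff)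
  moreover have "inj_on (\<lambda>v. {v, n}) {..<n}"
    by (auto simp: inj_on_def doubleton_eq_iff)
  ultimately show ?thesis
    by (simp add: sum.union_disjoint finite_tip_pairs sum.reindex)
qed

lemma sum_ordered_tip_pairs:
  fixes F :: "nat set \<Rightarrow> real"
  shows "(\<Sum>y<n. \<Sum>v\<in>{..<n}-{y}. F {v, y}) = 2 * (\<Sum>P\<in>tip_pairs n. F P)"
proof (induction n)
  case (Suc n)
  have "{..<Suc n} - {y} = insert n ({..<n} - {y})" if "y < n" for y
    using that by auto
  then have "(\<Sum>y<Suc n. \<Sum>v\<in>{..<Suc n}-{y}. F {v, y}) =
        (\<Sum>y<n. F {y, n} + (\<Sum>v\<in>{..<n}-{y}. F {v, y})) + (\<Sum>v<n. F {v, n})"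
    by (simp add: lessThan_Suc insert_commute)
  then show ?case
    using Suc.IH by (simp add: sum.distrib sum_tip_pairs_Suc)
qed (simp add: tip_pairs_def)

lemma sum_PiE_dflt_insert:
  assumes "finite A" "x \<notin> A"
  shows "(\<Sum>f\<in>PiE_dflt (insert x A) d B. g f) = (\<Sum>f\<in>PiE_dflt A d B. \<Sum>y\<in>B x. g (f(x := y)))"
proof -
  have eq: "PiE_dflt (insert x A) d B = (\<lambda>(f, y). f(x := y)) ` (PiE_dflt A d B \<times> B x)"
  proof (intro equalityI subsetI)
    fix f assume f: "f \<in> PiE_dflt (insert x A) d B"
    have "(f(x := d), f x) \<in> PiE_dflt A d B \<times> B x"
      using f assms by (auto simp: PiE_dflt_def)
    moreover have "f = (\<lambda>(f, y). f(x := y)) (f(x := d), f x)" by simp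
    ultimately show "f \<in> (\<lambda>(f, y). f(x := y)) ` (PiE_dflt A d B \<times> B x)" by blast
  qed (use assms in \<open>auto simp: PiE_dflt_def\<close>)
  have inj: "inj_on (\<lambda>(f, y). f(x := y)) (PiE_dflt A d B \<times> B x)"
  proof (rule inj_onI, clarify)
    fix f y f' y'
    assume *: "f \<in> PiE_dflt A d B" "f' \<in> PiE_dflt A d B" "f(x := y) = f'(x := y')"
    then have "y = y'" by (metis fun_upd_same)
    moreover have "f = f'"
    proof
      fix z show "f z = f' z"
        using * assms by (cases "z = x") (auto simp: PiE_dflt_def dest: fun_cong[where x=z])
    qed
    ultimately show "f = f' \<and> y = y'" by simp
  qed
  show ?thesis
    unfolding eq by (subst sum.reindex[OF inj]) (auto simp: sum.cartesian_product intro!: sum.cong)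
qed

lemma sum_choice_functions_Suc:
  "1 \<le> n \<Longrightarrow> (\<Sum>s\<in>choice_functions (Suc n). g s) = (\<Sum>s\<in>choice_functions n. \<Sum>y<n. g (s(n := y)))"
proof -
  assume "1 \<le> n"
  then have "{1..<Suc n} = insert n {1..<n}" by auto
  then show ?thesis
    unfolding choice_functions_def by (simp add: sum_PiE_dflt_insert atLeast0LessThan)
qed

text \<open>Adding tip n as the sister of tip y leaves the split index of old pairs unchanged,
  gives the pair {y, n} index n, and gives {v, n} the index of the old pair {v, y}.
  Summed over the n choices of y, every old pair is thus counted n + 2 times.\<close>
lemma split_count_new_tip:
  assumes s: "s \<in> choice_functions n" and y: "y < n"
  shows "(\<Sum>P\<in>tip_pairs (Suc n). h (split_index (Suc n) (s(n := y)) P)) =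
         (\<Sum>P\<in>tip_pairs n. h (split_index n s P)) + h n +
         (\<Sum>v\<in>{..<n}-{y}. h (split_index n s {v, y}))"
proof -
  let ?s = "s(n := y)"
  have valid: "valid_choices (Suc n) ?s"
    using choice_functions_valid[OF s] y by (auto simp: valid_choices_def)
  have old: "split_index n ?s Q = split_index n s Q" for Q
    by (rule split_index_cong) auto
  have "split_index (Suc n) ?s P = split_index n s P" if "P \<in> tip_pairs n" for P
    using that split_index_Suc[OF valid] by (auto simp: tip_pairs_def yule_parent_def old)
  moreover have "split_index (Suc n) ?s {v, n} = (if v = y then n else split_index n s {v, y})"
    if "v < n" for v
    using that split_index_Suc[OF valid, of v n] by (simp add: yule_parent_def old)
  then have "(\<Sum>v<n. h (split_index (Suc n) ?s {v, n})) =
      h n + (\<Sum>v\<in>{..<n}-{y}. h (split_index n s {v, y}))"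
    using y by (simp add: sum.remove[of "{..<n}" y])
  ultimately show ?thesis
    by (simp add: sum_tip_pairs_Suc add.assoc)
qed

lemma split_count_Suc:
  assumes "1 \<le> n"
  shows "split_count (Suc n) h = (real n + 2) * split_count n h + fact n * h n"
proof -
  have "split_count (Suc n) h =
      (\<Sum>s\<in>choice_functions n. \<Sum>y<n. \<Sum>P\<in>tip_pairs (Suc n). h (split_index (Suc n) (s(n := y)) P))"
    unfolding split_count_def using assms by (rule sum_choice_functions_Suc)
  also have "\<dots> = (\<Sum>s\<in>choice_functions n.
      (real n + 2) * (\<Sum>P\<in>tip_pairs n. h (split_index n s P)) + real n * h n)"
    by (intro sum.cong refl)
       (simp add: split_count_new_tip sum.distrib sum_ordered_tip_pairs[of "\<lambda>P. h (split_index n _ P)"]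
         algebra_simps)
  also have "\<dots> = (real n + 2) * split_count n h + real n * fact (n - 1) * h n"
    by (simp add: sum.distrib sum_distrib_left split_count_def card_choice_functions)
  also have "real n * fact (n - 1) = fact n"
    using assms by (simp add: fact_reduce[of n])
  finally show ?thesis .
qed

lemma split_count_eq_kappa_sum: "split_count n h = fact (n + 1) * kappa_sum n h"
proof (induction n)
  case (Suc n)
  show ?case
  proof (cases "n = 0")
    case False
    have nz: "(real n + 1) * (real n + 2) \<noteq> 0"
      by simp
    have "split_count (Suc n) h = (real n + 2) * (fact (n + 1) * kappa_sum n h) + fact n * h n"
      using False by (simp add: split_count_Suc Suc.IH)
    also have "\<dots> = fact (Suc n + 1) * (kappa_sum n h + h n / ((real n + 1) * (real n + 2)))"
      using nz by (simp add: field_simps)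
    also have "kappa_sum n h + h n / ((real n + 1) * (real n + 2)) = kappa_sum (Suc n) h"
      using False by (simp add: kappa_sum_def)
    finally show ?thesis .
  qed (simp add: split_count_def kappa_sum_def tip_pairs_def)
qed (simp add: split_count_def kappa_sum_def tip_pairs_def)

lemma kappa_sum_eqI:
  assumes "F 1 = 0"
    and "\<And>k. 1 \<le> k \<Longrightarrow> F (Suc k) = F k + h k / ((real k + 1) * (real k + 2))"
    and "1 \<le> n"
  shows "kappa_sum n h = F n"
  using assms(3)
proof (induction n rule: dec_induct)
  case base
  then show ?case using assms(1) by (simp add: kappa_sum_def)
next
  case (step k)
  then show ?case
    using assms(2)[of k] by (simp add: kappa_sum_def)
qed

lemma kappa_sum_add: "kappa_sum n (\<lambda>k. f k + g k) = kappa_sum n f + kappa_sum n g"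
  by (simp add: kappa_sum_def add_divide_distrib sum.distrib)

lemma kappa_sum_one: "1 \<le> n \<Longrightarrow> kappa_sum n (\<lambda>_. 1) = (real n - 1) / (2 * (real n + 1))"
  by (rule kappa_sum_eqI) (simp_all add: divide_simps, simp add: algebra_simps)

lemma kappa_sum_Hn1: "1 \<le> n \<Longrightarrow> kappa_sum n (\<lambda>k. Hn k 1) = (real n - Hn n 1) / (real n + 1)"
  by (rule kappa_sum_eqI) (simp_all add: Hn_def divide_simps, simp add: algebra_simps)

lemma kappa_sum_Hn2: "1 \<le> n \<Longrightarrow> kappa_sum n (\<lambda>k. Hn k 2) = real n * (Hn n 2 - 1) / (real n + 1)"
  by (rule kappa_sum_eqI) (simp_all add: Hn_def divide_simps, simp add: algebra_simps power2_eq_square)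

lemma kappa_sum_Hn1_squared:
  "1 \<le> n \<Longrightarrow> kappa_sum n (\<lambda>k. (Hn k 1)\<^sup>2) = Hn n 2 + 1 - (Hn n 1 + 1)\<^sup>2 / (real n + 1)"
  by (rule kappa_sum_eqI) (simp_all add: Hn_def divide_simps, simp add: algebra_simps power2_eq_square)

section \<open>Independent exponential waiting times\<close>

text \<open>The rate is set to 1 at the unused index 0 so that every factor is a probability space.\<close>
definition waiting_time :: "nat \<Rightarrow> real measure" where
  "waiting_time i = density lborel (exponential_density (real (max 1 i)))"

definition waiting_times :: "nat \<Rightarrow> (nat \<Rightarrow> real) measure" where
  "waiting_times n = (\<Pi>\<^sub>M i\<in>{1..n}. waiting_time i)"

lemma prob_space_waiting_time: "prob_space (waiting_time i)"
  unfolding waiting_time_def by (rule prob_space_exponential_density) simp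

lemma waiting_time_moment:
  "has_bochner_integral (waiting_time i) (\<lambda>x. x ^ k) (fact k / real (max 1 i) ^ k)"
proof -
  have "distributed (waiting_time i) lborel (\<lambda>x. x) (erlang_density 0 (real (max 1 i)))"
    by (auto simp: distributed_def waiting_time_def distr_id2)
  from prob_space.has_bochner_integral_erlang_ith_moment[OF prob_space_waiting_time _ this, of k]
  show ?thesis by simp
qed

interpretation waiting_time: product_sigma_finite waiting_time
  unfolding product_sigma_finite_def
  using prob_space_waiting_time prob_space_imp_sigma_finite by blast

lemma prob_space_waiting_times: "prob_space (waiting_times n)"
  unfolding waiting_times_def by (rule prob_space_PiM) (rule prob_space_waiting_time)

lemma waiting_times_eq:
  "(\<Pi>\<^sub>M i\<in>{1..n}. density lborel (exponential_density (real i))) = waiting_times n"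
  unfolding waiting_times_def waiting_time_def by (rule PiM_cong) auto

lemma waiting_times_integral_prod:
  fixes f :: "nat \<Rightarrow> real \<Rightarrow> real"
  assumes "J \<subseteq> {1..n}" and int: "\<And>i. i \<in> J \<Longrightarrow> integrable (waiting_time i) (f i)"
  shows "integrable (waiting_times n) (\<lambda>t. \<Prod>i\<in>J. f i (t i))"
    and "integral\<^sup>L (waiting_times n) (\<lambda>t. \<Prod>i\<in>J. f i (t i)) = (\<Prod>i\<in>J. integral\<^sup>L (waiting_time i) (f i))"
proof -
  define g where "g i x = (if i \<in> J then f i x else 1)" for i x
  have prod_eq: "(\<Prod>i\<in>{1..n}. g i (t i)) = (\<Prod>i\<in>J. f i (t i))" for t
    using assms(1) by (simp add: g_def prod.If_cases Int_absorb1 Int_absorb2)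
  have const: "integrable (waiting_time i) (\<lambda>_. 1::real)" "integral\<^sup>L (waiting_time i) (\<lambda>_. 1::real) = 1"
    for i using waiting_time_moment[of i 0] by (simp_all add: has_bochner_integral_iff)
  moreover have "integrable (waiting_time i) (g i)" for i
    using int const by (cases "i \<in> J") (simp_all add: g_def[abs_def])
  moreover have "(\<Prod>i\<in>{1..n}. integral\<^sup>L (waiting_time i) (g i)) = (\<Prod>i\<in>J. integral\<^sup>L (waiting_time i) (f i))"
  proof -
    have "integral\<^sup>L (waiting_time i) (g i) = (if i \<in> J then integral\<^sup>L (waiting_time i) (f i) else 1)" for i
      using const by (simp add: g_def[abs_def])
    then show ?thesis
      using assms(1) by (simp add: prod.If_cases Int_absorb1 Int_absorb2)
  qed
  ultimately show "integrable (waiting_times n) (\<lambda>t. \<Prod>i\<in>J. f i (t i))"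
    and "integral\<^sup>L (waiting_times n) (\<lambda>t. \<Prod>i\<in>J. f i (t i)) = (\<Prod>i\<in>J. integral\<^sup>L (waiting_time i) (f i))"
    using prod_eq waiting_time.product_integrable_prod[of "{1..n}" g]
      waiting_time.product_integral_prod[of "{1..n}" g]
    unfolding waiting_times_def by simp_all
qed

lemma waiting_times_integral_component:
  assumes "i \<in> {1..n}"
  shows "integrable (waiting_times n) (\<lambda>t. t i)" "integral\<^sup>L (waiting_times n) (\<lambda>t. t i) = 1 / real i"
  using waiting_times_integral_prod[of "{i}" n "\<lambda>_ x. x"] waiting_time_moment[of i 1] assms
  by (simp_all add: has_bochner_integral_iff)

lemma waiting_times_integral_mult:
  assumes "i \<in> {1..n}" "j \<in> {1..n}"
  shows "integrable (waiting_times n) (\<lambda>t. t i * t j)"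
    and "integral\<^sup>L (waiting_times n) (\<lambda>t. t i * t j) =
      1 / (real i * real j) + (if i = j then 1 / (real i)\<^sup>2 else 0)"
proof -
  have "has_bochner_integral (waiting_times n) (\<lambda>t. t i * t j)
      (1 / (real i * real j) + (if i = j then 1 / (real i)\<^sup>2 else 0))"
  proof (cases "i = j")
    case True
    then show ?thesis
      using waiting_times_integral_prod[of "{i}" n "\<lambda>_ x. x ^ 2"] waiting_time_moment[of i 2] assms
      by (simp add: has_bochner_integral_iff power2_eq_square)
  next
    case False
    then show ?thesis
      using waiting_times_integral_prod[of "{i, j}" n "\<lambda>_ x. x"]
        waiting_time_moment[of i 1] waiting_time_moment[of j 1] assms
      by (auto simp: has_bochner_integral_iff)
  qed
  then show "integrable (waiting_times n) (\<lambda>t. t i * t j)"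
    and "integral\<^sup>L (waiting_times n) (\<lambda>t. t i * t j) =
      1 / (real i * real j) + (if i = j then 1 / (real i)\<^sup>2 else 0)"
    by (simp_all add: has_bochner_integral_iff)
qed

lemma waiting_times_integral_partial_sum:
  assumes "k \<le> n"
  shows "integrable (waiting_times n) (\<lambda>t. \<Sum>i=1..k. t i)"
    and "integral\<^sup>L (waiting_times n) (\<lambda>t. \<Sum>i=1..k. t i) = Hn k 1"
  using waiting_times_integral_component[of _ n] assms
  by (auto simp: Hn_def intro!: sum.cong)

lemma waiting_times_integral_partial_sum_squared:
  assumes "k \<le> n"
  shows "integrable (waiting_times n) (\<lambda>t. (\<Sum>i=1..k. t i)\<^sup>2)"
    and "integral\<^sup>L (waiting_times n) (\<lambda>t. (\<Sum>i=1..k. t i)\<^sup>2) = (Hn k 1)\<^sup>2 + Hn k 2"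
proof -
  have square: "(\<Sum>i=1..k. t i)\<^sup>2 = (\<Sum>i=1..k. \<Sum>j=1..k. t i * t j)" for t :: "nat \<Rightarrow> real"
    by (simp add: power2_eq_square sum_product)
  have "i \<in> {1..n}" if "i \<in> {1..k}" for i
    using that assms by auto
  note mult = waiting_times_integral_mult[OF this this]
  show "integrable (waiting_times n) (\<lambda>t. (\<Sum>i=1..k. t i)\<^sup>2)"
    unfolding square using mult by (intro Bochner_Integration.integrable_sum) auto
  have "integral\<^sup>L (waiting_times n) (\<lambda>t. (\<Sum>i=1..k. t i)\<^sup>2) =
      (\<Sum>i=1..k. integral\<^sup>L (waiting_times n) (\<lambda>t. \<Sum>j=1..k. t i * t j))"
    unfolding square using mult
    by (intro Bochner_Integration.integral_sum Bochner_Integration.integrable_sum) auto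
  also have "\<dots> = (\<Sum>i=1..k. \<Sum>j=1..k. integral\<^sup>L (waiting_times n) (\<lambda>t. t i * t j))"
    using mult by (intro sum.cong refl Bochner_Integration.integral_sum) auto
  also have "\<dots> = (\<Sum>i=1..k. \<Sum>j=1..k. 1 / (real i * real j) + (if i = j then 1 / (real i)\<^sup>2 else 0))"
    using mult by (intro sum.cong refl) auto
  also have "\<dots> = (Hn k 1)\<^sup>2 + Hn k 2"
    by (simp add: sum.distrib Hn_def power2_eq_square sum_product)
  finally show "integral\<^sup>L (waiting_times n) (\<lambda>t. (\<Sum>i=1..k. t i)\<^sup>2) = (Hn k 1)\<^sup>2 + Hn k 2" .
qed

section \<open>Moments of the split time\<close>

lemma integral_pair_pmf_finite:
  fixes p :: "'a pmf" and N :: "'b measure" and G :: "'a \<times> 'b \<Rightarrow> real"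
  assumes fin: "finite (set_pmf p)" and N: "prob_space N"
    and meas: "G \<in> borel_measurable (measure_pmf p \<Otimes>\<^sub>M N)"
    and int: "\<And>d. d \<in> set_pmf p \<Longrightarrow> integrable N (\<lambda>t. G (d, t))"
  shows "integrable (measure_pmf p \<Otimes>\<^sub>M N) G"
    and "integral\<^sup>L (measure_pmf p \<Otimes>\<^sub>M N) G = (\<Sum>d\<in>set_pmf p. pmf p d * integral\<^sup>L N (\<lambda>t. G (d, t)))"
proof -
  interpret N: prob_space N by (rule N)
  interpret P: pair_sigma_finite "measure_pmf p" N
    by (intro pair_sigma_finite.intro measure_pmf.sigma_finite_measure_axioms N.sigma_finite_measure_axioms)
  have "(\<integral>\<^sup>+ x. ennreal (norm (G x)) \<partial>(measure_pmf p \<Otimes>\<^sub>M N)) =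
        (\<integral>\<^sup>+ d. \<integral>\<^sup>+ t. ennreal (norm (G (d, t))) \<partial>N \<partial>measure_pmf p)"
    using meas by (subst N.nn_integral_fst[symmetric]) auto
  also have "\<dots> = (\<Sum>d\<in>set_pmf p. (\<integral>\<^sup>+ t. ennreal (norm (G (d, t))) \<partial>N) * pmf p d)"
    by (rule nn_integral_measure_pmf_finite[OF fin]) simp
  also have "\<dots> < \<infinity>"
    using int fin
    by (auto simp: integrable_iff_bounded ennreal_mult_less_top less_top[symmetric] ennreal_mult_eq_top_iff)
  finally show I: "integrable (measure_pmf p \<Otimes>\<^sub>M N) G"
    using meas by (auto simp: integrable_iff_bounded)
  have "integral\<^sup>L (measure_pmf p \<Otimes>\<^sub>M N) G = (\<integral>d. (\<integral>t. G (d, t) \<partial>N) \<partial>measure_pmf p)"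
    using P.integral_fst'[OF I] by simp
  also have "\<dots> = (\<Sum>d\<in>set_pmf p. (\<integral>t. G (d, t) \<partial>N) * pmf p d)"
    by (rule integral_measure_pmf_real[OF fin]) simp
  finally show "integral\<^sup>L (measure_pmf p \<Otimes>\<^sub>M N) G = (\<Sum>d\<in>set_pmf p. pmf p d * integral\<^sup>L N (\<lambda>t. G (d, t)))"
    by (simp add: mult.commute)
qed

lemma yule_space_eq: "yule_space n = measure_pmf (yule_discrete n) \<Otimes>\<^sub>M waiting_times n"
  unfolding yule_space_def waiting_times_eq ..

lemma prob_space_yule_space: "prob_space (yule_space n)"
  unfolding yule_space_eq
  by (intro prob_space_pair prob_space_measure_pmf prob_space_waiting_times)

lemma yule_discrete_eq:
  assumes "2 \<le> n"
  shows "yule_discrete n = pair_pmf (pmf_of_set (choice_functions n)) (pmf_of_set (tip_pairs n))"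
    and "set_pmf (yule_discrete n) = choice_functions n \<times> tip_pairs n"
proof -
  have "{0, 1} \<in> tip_pairs n"
    using assms unfolding tip_pairs_def by (intro CollectI exI[of _ "0::nat"] exI[of _ "1::nat"]) auto
  then have "tip_pairs n \<noteq> {}" by auto
  moreover have "choice_functions n \<noteq> {}"
    by (simp add: choice_functions_def)
  moreover show eq: "yule_discrete n = pair_pmf (pmf_of_set (choice_functions n)) (pmf_of_set (tip_pairs n))"
    unfolding yule_discrete_def choice_functions_def tip_pairs_def by (subst Pi_pmf_of_set) auto
  ultimately show "set_pmf (yule_discrete n) = choice_functions n \<times> tip_pairs n"
    by (simp add: eq finite_choice_functions finite_tip_pairs)
qed

definition split_time :: "nat \<Rightarrow> ((nat \<Rightarrow> nat) \<times> nat set) \<times> (nat \<Rightarrow> real) \<Rightarrow> real" where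
  "split_time n \<omega> = yule_height n \<omega> - yule_coal n \<omega>"

lemma split_time_eq:
  "split_time n \<omega> =
     (\<Sum>i=1..n. if i \<le> split_index n (fst (fst \<omega>)) (snd (fst \<omega>)) then snd \<omega> i else 0)"
proof -
  define k where "k = split_index n (fst (fst \<omega>)) (snd (fst \<omega>))"
  have "(\<Sum>i=1..n. snd \<omega> i) = (\<Sum>i\<in>{i\<in>{1..n}. i \<le> k}. snd \<omega> i) + (\<Sum>i=k+1..n. snd \<omega> i)"
    by (subst sum.union_disjoint[symmetric]) (auto intro!: sum.cong)
  moreover have "(\<Sum>i\<in>{i\<in>{1..n}. i \<le> k}. snd \<omega> i) = (\<Sum>i=1..n. if i \<le> k then snd \<omega> i else 0)"
    by (rule sum.inter_filter) simp
  ultimately show ?thesis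
    unfolding split_time_def yule_height_def yule_coal_def k_def[symmetric] by simp
qed

lemma split_time_measurable: "split_time n \<in> borel_measurable (yule_space n)"
proof -
  have "(\<lambda>\<omega>. snd \<omega> i) \<in> borel_measurable (yule_space n)" if "i \<in> {1..n}" for i
  proof -
    have "(\<lambda>t. t i) \<in> measurable (waiting_times n) (waiting_time i)"
      unfolding waiting_times_def by (rule measurable_component_singleton[OF that])
    moreover have "measurable (waiting_times n) (waiting_time i) = measurable (waiting_times n) borel"
      by (rule measurable_cong_sets) (simp_all add: waiting_time_def)
    ultimately show ?thesis
      unfolding yule_space_eq by (intro measurable_compose[OF measurable_snd]) simp
  qed
  moreover have "(\<lambda>\<omega>. g (fst \<omega>)) \<in> borel_measurable (yule_space n)" for g :: "_ \<Rightarrow> real"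
    unfolding yule_space_eq by (rule measurable_compose[OF measurable_fst]) simp
  ultimately have "(\<lambda>\<omega>. \<Sum>i=1..n. (if i \<le> split_index n (fst (fst \<omega>)) (snd (fst \<omega>)) then 1 else 0) * snd \<omega> i)
      \<in> borel_measurable (yule_space n)"
    by (intro borel_measurable_sum borel_measurable_times) auto
  moreover have "(\<lambda>\<omega>. \<Sum>i=1..n. if i \<le> split_index n (fst (fst \<omega>)) (snd (fst \<omega>)) then snd \<omega> i else 0 :: real) =
      (\<lambda>\<omega>. \<Sum>i=1..n. (if i \<le> split_index n (fst (fst \<omega>)) (snd (fst \<omega>)) then 1 else 0) * snd \<omega> i)"
    by (intro ext sum.cong) auto
  ultimately show ?thesis
    unfolding split_time_eq[abs_def] by simp
qed

lemma split_time_support: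
  assumes "(s, P) \<in> choice_functions n \<times> tip_pairs n"
  shows "split_time n ((s, P), t) = (\<Sum>i=1..split_index n s P. t i)"
proof -
  have "split_index n s P < n"
    using split_index_range[OF assms] by simp
  then show ?thesis
    unfolding split_time_eq by (simp add: sum.inter_filter[symmetric]) (intro sum.cong; auto)
qed

lemma integral_yule_space_split_index:
  assumes n: "2 \<le> n"
    and meas: "F \<in> borel_measurable (yule_space n)"
    and eq: "\<And>s P t. (s, P) \<in> choice_functions n \<times> tip_pairs n \<Longrightarrow> F ((s, P), t) = \<phi> (split_index n s P) t"
    and int: "\<And>k. k \<in> {1..<n} \<Longrightarrow> integrable (waiting_times n) (\<phi> k)"
  shows "integrable (yule_space n) F"
    and "integral\<^sup>L (yule_space n) F =
      kappa_sum n (\<lambda>k. integral\<^sup>L (waiting_times n) (\<phi> k)) / kappa_sum n (\<lambda>_. 1)"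
proof -
  let ?D = "choice_functions n \<times> tip_pairs n"
  have fin: "finite (set_pmf (yule_discrete n))"
    using yule_discrete_eq(2)[OF n] finite_choice_functions finite_tip_pairs by simp
  have intd: "integrable (waiting_times n) (\<lambda>t. F (d, t))" if "d \<in> set_pmf (yule_discrete n)" for d
    using that int split_index_range eq unfolding yule_discrete_eq(2)[OF n] by (cases d) auto
  note fubini = integral_pair_pmf_finite[OF fin prob_space_waiting_times meas[unfolded yule_space_eq] intd]
  show "integrable (yule_space n) F"
    using fubini(1) by (simp add: yule_space_eq)
  have "?D \<noteq> {}"
    using set_pmf_not_empty[of "yule_discrete n"] yule_discrete_eq(2)[OF n] by simp
  then have pmf: "pmf (yule_discrete n) d = 1 / split_count n (\<lambda>_. 1)" if "d \<in> ?D" for d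
    using that yule_discrete_eq(1)[OF n] finite_choice_functions finite_tip_pairs
    by (cases d) (simp add: pmf_pair split_count_def card_cartesian_product)
  have "integral\<^sup>L (yule_space n) F = (\<Sum>d\<in>?D. pmf (yule_discrete n) d * integral\<^sup>L (waiting_times n) (\<lambda>t. F (d, t)))"
    using fubini(2) yule_discrete_eq(2)[OF n] by (simp add: yule_space_eq)
  also have "\<dots> = (\<Sum>(s, P)\<in>?D. integral\<^sup>L (waiting_times n) (\<phi> (split_index n s P))) / split_count n (\<lambda>_. 1)"
    unfolding sum_divide_distrib by (intro sum.cong refl) (auto simp: pmf eq)
  also have "\<dots> = split_count n (\<lambda>k. integral\<^sup>L (waiting_times n) (\<phi> k)) / split_count n (\<lambda>_. 1)"
    by (simp add: split_count_def sum.cartesian_product)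
  finally show "integral\<^sup>L (yule_space n) F =
      kappa_sum n (\<lambda>k. integral\<^sup>L (waiting_times n) (\<phi> k)) / kappa_sum n (\<lambda>_. 1)"
    by (simp add: split_count_eq_kappa_sum)
qed

lemma integral_split_time:
  assumes n: "2 \<le> n"
  shows "integrable (yule_space n) (split_time n)"
    and "integral\<^sup>L (yule_space n) (split_time n) = kappa_sum n (\<lambda>k. Hn k 1) / kappa_sum n (\<lambda>_. 1)"
    and "integrable (yule_space n) (\<lambda>\<omega>. (split_time n \<omega>)\<^sup>2)"
    and "integral\<^sup>L (yule_space n) (\<lambda>\<omega>. (split_time n \<omega>)\<^sup>2) =
      kappa_sum n (\<lambda>k. (Hn k 1)\<^sup>2 + Hn k 2) / kappa_sum n (\<lambda>_. 1)"
proof -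
  have "k \<le> n" if "k \<in> {1..<n}" for k
    using that by simp
  note sums = waiting_times_integral_partial_sum[OF this] waiting_times_integral_partial_sum_squared[OF this]
  have support_squared: "(split_time n ((s, P), t))\<^sup>2 = (\<Sum>i=1..split_index n s P. t i)\<^sup>2"
    if "(s, P) \<in> choice_functions n \<times> tip_pairs n" for s P t
    using split_time_support[OF that] by simp
  note first = integral_yule_space_split_index[where \<phi>="\<lambda>k t. \<Sum>i=1..k. t i",
      OF n split_time_measurable split_time_support sums(1)]
  note second = integral_yule_space_split_index[where \<phi>="\<lambda>k t. (\<Sum>i=1..k. t i)\<^sup>2",
      OF n borel_measurable_power[OF split_time_measurable] support_squared sums(3)]
  show "integrable (yule_space n) (split_time n)"
    and "integral\<^sup>L (yule_space n) (split_time n) = kappa_sum n (\<lambda>k. Hn k 1) / kappa_sum n (\<lambda>_. 1)"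
    and "integrable (yule_space n) (\<lambda>\<omega>. (split_time n \<omega>)\<^sup>2)"
    and "integral\<^sup>L (yule_space n) (\<lambda>\<omega>. (split_time n \<omega>)\<^sup>2) =
      kappa_sum n (\<lambda>k. (Hn k 1)\<^sup>2 + Hn k 2) / kappa_sum n (\<lambda>_. 1)"
    using first second sums unfolding kappa_sum_def by simp_all
qed

lemma variance_split_time:
  assumes n: "2 \<le> n"
  shows "prob_space.variance (yule_space n) (split_time n) =
      4 * (Hn n 2 - 1) - 2 * (Hn n 1)\<^sup>2 / (real n - 1) + 4 * Hn n 1 / (real n - 1)
      + 6 * Hn n 2 / (real n - 1) - 8 / (real n - 1) - 4 * (Hn n 1 - 1)\<^sup>2 / (real n - 1)\<^sup>2"
proof -
  interpret prob_space "yule_space n"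
    by (rule prob_space_yule_space)
  note moments = integral_split_time[OF n]
  have closed_form: "(G + 1 - (H + 1)\<^sup>2 / (x + 1) + x * (G - 1) / (x + 1)) / ((x - 1) / (2 * (x + 1)))
      - ((x - H) / (x + 1) / ((x - 1) / (2 * (x + 1))))\<^sup>2 =
      4 * (G - 1) - 2 * H\<^sup>2 / (x - 1) + 4 * H / (x - 1) + 6 * G / (x - 1) - 8 / (x - 1)
      - 4 * (H - 1)\<^sup>2 / (x - 1)\<^sup>2" if "x > 1" for x G H :: real
    using that by (simp add: divide_simps) (simp add: algebra_simps power2_eq_square)
  have "1 \<le> n" using n by simp
  show ?thesis
    using variance_eq[OF moments(1,3)] closed_form[of "real n" "Hn n 2" "Hn n 1"] n
    unfolding moments(2,4) kappa_sum_add
      kappa_sum_one[OF \<open>1 \<le> n\<close>] kappa_sum_Hn1[OF \<open>1 \<le> n\<close>] kappa_sum_Hn2[OF \<open>1 \<le> n\<close>]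
      kappa_sum_Hn1_squared[OF \<open>1 \<le> n\<close>]
    by simp
qed

section \<open>The limit\<close>

lemma Hn_one_bounds:
  assumes "1 \<le> n"
  shows "1 \<le> Hn n 1" and "Hn n 1 \<le> 1 + ln (real n)"
proof -
  have harm: "Hn n 1 = harm n"
    by (simp add: Hn_def harm_def inverse_eq_divide)
  show "1 \<le> Hn n 1"
    using harm_mono[of 1 n] assms unfolding harm by (simp add: harm_def)
  obtain m where m: "n = Suc m"
    using assms by (cases n) auto
  have "harm n - ln (real n) \<le> harm 1 - ln (real 1)"
    using decseqD[OF decseq_harm_diff_ln, of 0 m] by (simp add: m)
  then show "Hn n 1 \<le> 1 + ln (real n)"
    unfolding harm by (simp add: harm_def)
qed

lemma tendsto_Hn2: "(\<lambda>n. Hn n 2) \<longlonglongrightarrow> pi\<^sup>2 / 6"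
proof -
  have "Hn n 2 = (\<Sum>i<n. 1 / (real i + 1)\<^sup>2)" for n
    by (induction n) (simp_all add: Hn_def)
  then show ?thesis
    using inverse_squares_sums by (simp add: sums_def add.commute)
qed

lemma tendsto_zero_Hn1_bound:
  fixes g :: "real \<Rightarrow> real" and d :: "nat \<Rightarrow> real"
  assumes "mono_on {1..} g" and "\<And>x. 1 \<le> x \<Longrightarrow> 0 \<le> g x"
    and "eventually (\<lambda>n. 0 < d n) sequentially"
    and "(\<lambda>n. g (1 + ln (real n)) / d n) \<longlonglongrightarrow> 0"
  shows "(\<lambda>n. g (Hn n 1) / d n) \<longlonglongrightarrow> 0"
proof (rule tendsto_sandwich[where f="\<lambda>_. 0"])
  have ev: "eventually (\<lambda>n. 0 < d n \<and> 1 \<le> n) sequentially"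
    using assms(3) eventually_ge_at_top by (rule eventually_conj)
  then show "eventually (\<lambda>n. 0 \<le> g (Hn n 1) / d n) sequentially"
  proof eventually_elim
    case (elim n)
    then show ?case
      using Hn_one_bounds(1)[of n] assms(2) by simp
  qed
  from ev show "eventually (\<lambda>n. g (Hn n 1) / d n \<le> g (1 + ln (real n)) / d n) sequentially"
  proof eventually_elim
    case (elim n)
    have "g (Hn n 1) \<le> g (1 + ln (real n))"
      using Hn_one_bounds[of n] elim ln_ge_zero[of "real n"] by (intro mono_onD[OF assms(1)]) auto
    then show ?case
      using elim by (simp add: divide_right_mono)
  qed
qed (simp_all add: assms(4))

lemma tendsto_variance_formula:
  "(\<lambda>n. 4 * (Hn n 2 - 1) - 2 * (Hn n 1)\<^sup>2 / (real n - 1) + 4 * Hn n 1 / (real n - 1)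
      + 6 * Hn n 2 / (real n - 1) - 8 / (real n - 1) - 4 * (Hn n 1 - 1)\<^sup>2 / (real n - 1)\<^sup>2)
    \<longlonglongrightarrow> 2 * pi\<^sup>2 / 3 - 4"
proof -
  have ev: "eventually (\<lambda>n. 0 < real n - 1) sequentially" "eventually (\<lambda>n. 0 < (real n - 1)\<^sup>2) sequentially"
    by real_asymp+
  have "(\<lambda>n. (Hn n 1)\<^sup>2 / (real n - 1)) \<longlonglongrightarrow> 0"
    by (rule tendsto_zero_Hn1_bound[OF _ _ ev(1)]) (auto intro!: mono_onI power_mono, real_asymp)
  moreover have "(\<lambda>n. Hn n 1 / (real n - 1)) \<longlonglongrightarrow> 0"
    by (rule tendsto_zero_Hn1_bound[where g="\<lambda>x. x", OF _ _ ev(1)]) (auto intro!: mono_onI, real_asymp)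
  moreover have "(\<lambda>n. (Hn n 1 - 1)\<^sup>2 / (real n - 1)\<^sup>2) \<longlonglongrightarrow> 0"
    by (rule tendsto_zero_Hn1_bound[OF _ _ ev(2)]) (auto intro!: mono_onI power_mono, real_asymp)
  moreover have "(\<lambda>n. 1 / (real n - 1)) \<longlonglongrightarrow> 0"
    by real_asymp
  ultimately have "(\<lambda>n. 4 * (Hn n 2 - 1) - 2 * ((Hn n 1)\<^sup>2 / (real n - 1)) + 4 * (Hn n 1 / (real n - 1))
      + 6 * Hn n 2 * (1 / (real n - 1)) - 8 * (1 / (real n - 1)) - 4 * ((Hn n 1 - 1)\<^sup>2 / (real n - 1)\<^sup>2))
    \<longlonglongrightarrow> 4 * (pi\<^sup>2 / 6 - 1) - 2 * 0 + 4 * 0 + 6 * (pi\<^sup>2 / 6) * 0 - 8 * 0 - 4 * 0"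
    by (intro tendsto_intros tendsto_Hn2)
  then show ?thesis
    by simp
qed

theorem lemmaY4p10:
  defines "V \<equiv> \<lambda>n::nat.
     let M = yule_space n; X = (\<lambda>\<omega>. yule_height n \<omega> - yule_coal n \<omega>)
     in integral\<^sup>L M (\<lambda>\<omega>. (X \<omega> - integral\<^sup>L M X)\<^sup>2)"
  shows "(\<forall>n\<ge>2. V n =
            4 * (Hn n 2 - 1) - 2 * (Hn n 1)\<^sup>2 / (real n - 1) + 4 * Hn n 1 / (real n - 1)
            + 6 * Hn n 2 / (real n - 1) - 8 / (real n - 1)
            - 4 * (Hn n 1 - 1)\<^sup>2 / (real n - 1)\<^sup>2)
       \<and> V \<longlonglongrightarrow> 2 * pi\<^sup>2 / 3 - 4"
  (is "(\<forall>n\<ge>2. V n = ?formula n) \<and> _")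
proof
  have "V n = prob_space.variance (yule_space n) (split_time n)" for n
    by (simp add: V_def split_time_def[abs_def] Let_def)
  then show closed_form: "\<forall>n\<ge>2. V n = ?formula n"
    by (simp add: variance_split_time)
  have "eventually (\<lambda>n. ?formula n = V n) sequentially"
    using eventually_ge_at_top[of 2] by eventually_elim (simp add: closed_form)
  with tendsto_variance_formula show "V \<longlonglongrightarrow> 2 * pi\<^sup>2 / 3 - 4"
    by (rule Lim_transform_eventually)
qed

end
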